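(* For every $n\ge1$, the number $r_{n+1}$ of rooted duplication trees with $n+1$ leaves equals the number $\sigma_n$ of counter arrays of length $n$.
   Context: A counter array of length $n$ is an integer array $(a_1,\dots,a_n)$ with $1\le a_i\le i$ for all $i$ and $a_{i+1}\ge a_i-1$ for all $1\le i<n$; $\sigma_n$ denotes the number of such arrays. Rooted duplication trees: start with the ordered array $(g)$ consisting of a single gene (the root). A tandem-duplication event applied to a current ordered array of genes $(g_1,\dots,g_m)$ chooses a contiguous block $g_i,\dots,g_{i+\ell-1}$, creates for each $g_j$ in the block two new genes $\mathrm{lc}(g_j)$, $\mathrm{rc}(g_j)$ (its left and right child), and replaces the block by $\mathrm{lc}(g_i),\dots,\mathrm{lc}(g_{i+\ell-1}),\mathrm{rc}(g_i),\dots,\mathrm{rc}(g_{i+\ell-1})$. A rooted duplication tree is a rooted binary tree (each internal node has a left and a right child) with the linear order on its leaves, arising from the single root by a finite sequence of such events (leaves are the genes of the final array, in that array's order). Trees are identified if isomorphic as rooted binary trees preserving left/right children and leaf order; $r_m$ counts the classes with $m$ leaves. *)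

theory Defs
  imports Main
begin

text \<open>A counter array of length n, stored 0-indexed as a list a with a!i = a_(i+1):
  1 <= a_i <= i and a_(i+1) >= a_i - 1 (written as a_(i+1) + 1 >= a_i to avoid
  truncated subtraction).\<close>

definition counter_array :: "nat \<Rightarrow> nat list \<Rightarrow> bool" where
  "counter_array n a \<longleftrightarrow> length a = n
     \<and> (\<forall>i<n. 1 \<le> a ! i \<and> a ! i \<le> i + 1)
     \<and> (\<forall>i. i + 1 < n \<longrightarrow> a ! i \<le> a ! (i + 1) + 1)"

definition sigma :: "nat \<Rightarrow> nat" where
  "sigma n = card {a. counter_array n a}"

text \<open>Genes are named canonically by their path from the root in the duplication
  tree (False = left child, True = right child): the root is [], lc g = g @ [False],
  rc g = g @ [True].\<close>

definition dup_event :: "nat \<Rightarrow> nat \<Rightarrow> bool list list \<Rightarrow> bool list list" where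
  "dup_event i l xs =
     (let blk = take l (drop i xs) in
      take i xs @ map (\<lambda>g. g @ [False]) blk @ map (\<lambda>g. g @ [True]) blk @ drop (i + l) xs)"

inductive dup_reachable :: "bool list list \<Rightarrow> bool" where
  init: "dup_reachable [[]]"
| step: "dup_reachable xs \<Longrightarrow> 1 \<le> l \<Longrightarrow> i + l \<le> length xs \<Longrightarrow>
           dup_reachable (dup_event i l xs)"

text \<open>With canonical path names, the tree (nodes = all prefixes of the leaf paths)
  together with the leaf order is exactly determined by the final array, and two
  such trees are isomorphic (preserving left/right children and leaf order) iff
  their final arrays are equal.  Hence isomorphism classes of rooted duplication
  trees with m leaves correspond to reachable arrays of length m.\<close>

definition r_dup :: "nat \<Rightarrow> nat" where
  "r_dup m = card {xs. dup_reachable xs \<and> length xs = m}"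

end

theory Submission
  imports Defs "HOL-Library.Sublist"
begin

text \<open>Record a duplication history as the list of its events (i, l), most recent first.
  If an event lies entirely to the left of the start of the event before it, the two
  commute, so every reachable array is produced by a canonical history in which this
  never happens.  A canonical history is determined by its final array: the genes are
  pairwise incomparable paths, so the most recent event is recognisable as the right-most
  tandem block, and undoing it is injective.  Finally, writing each event (i, l) as the
  descending run i + l, ..., i + 1 turns a canonical history that duplicates n genes into a
  counter array of length n.  Canonicity says that each run starts at a value no smaller
  than the last value of the previous run, so the runs are exactly the maximal stretches
  descending in steps of one, and the array can be decoded value by value.  Hence both
  r_(n+1) and sigma_n count the canonical histories that duplicate n genes.\<close>

lemma dup_event_append:
  assumes "length P = i" "length X = l"
  shows "dup_event i l (P @ X @ R) = P @ map (\<lambda>g. g @ [False]) X @ map (\<lambda>g. g @ [True]) X @ R"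
  using assms by (simp add: dup_event_def)

lemma split_list_block:
  assumes "i + l \<le> length xs"
  obtains P X R where "xs = P @ X @ R" "length P = i" "length X = l"
proof
  show "xs = take i xs @ take l (drop i xs) @ drop (i + l) xs"
    by (metis add.commute append_take_drop_id drop_drop)
qed (use assms in auto)

lemma length_dup_event:
  "i + l \<le> length xs \<Longrightarrow> length (dup_event i l xs) = length xs + l"
  by (simp add: dup_event_def Let_def)

lemma nth_dup_event:
  assumes "i + l \<le> length xs" "t < length xs + l"
  shows "dup_event i l xs ! t =
    (if t < i then xs ! t
     else if t < i + l then xs ! t @ [False]
     else if t < i + 2 * l then xs ! (t - l) @ [True]
     else xs ! (t - l))"
  using assms
  by (auto simp: dup_event_def Let_def nth_append min_def intro!: arg_cong[where f = "nth xs"])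

lemma dup_event_inj:
  assumes "i + l \<le> length xs" "length xs' = length xs"
    and "dup_event i l xs = dup_event i l xs'"
  shows "xs = xs'"
proof (rule nth_equalityI)
  fix t assume "t < length xs"
  then show "xs ! t = xs' ! t"
  proof (cases "t < i + l")
    case True
    then show ?thesis
      using assms \<open>t < length xs\<close> nth_dup_event[of i l xs t] nth_dup_event[of i l xs' t]
      by (auto split: if_splits)
  next
    case False
    then show ?thesis
      using assms \<open>t < length xs\<close> nth_dup_event[of i l xs "t + l"] nth_dup_event[of i l xs' "t + l"]
      by (auto split: if_splits)
  qed
qed (use assms in simp)

lemma dup_event_commute:
  assumes "i + l \<le> j" "j + k \<le> length xs"
  shows "dup_event i l (dup_event j k xs) = dup_event (j + l) k (dup_event i l xs)"
proof -
  obtain Q Y R where xs: "xs = Q @ Y @ R" "length Q = j" "length Y = k"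
    using split_list_block assms(2) by blast
  obtain P X M where Q: "Q = P @ X @ M" "length P = i" "length X = l"
    using split_list_block[of i l Q] assms(1) xs(2) by blast
  let ?L = "map (\<lambda>g. g @ [False])" and ?R = "map (\<lambda>g. g @ [True])"
  have "dup_event i l (dup_event j k xs) = P @ ?L X @ ?R X @ M @ ?L Y @ ?R Y @ R"
    using dup_event_append[of Q j Y k R] dup_event_append[of P i X l] xs Q by simp
  also have "\<dots> = dup_event (j + l) k ((P @ ?L X @ ?R X @ M) @ Y @ R)"
    using dup_event_append[of "P @ ?L X @ ?R X @ M" "j + l" Y k R] xs Q by simp
  also have "\<dots> = dup_event (j + l) k (dup_event i l xs)"
    using xs Q by (simp add: dup_event_append)
  finally show ?thesis .
qed

lemma sorted_wrt_sympD:
  assumes "sorted_wrt R xs" "symp R" "x \<in> set xs" "y \<in> set xs" "x \<noteq> y"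
  shows "R x y"
  using assms by (induction xs) (auto dest: sympD)

lemma parallel_snocI: "g \<parallel> h \<Longrightarrow> g @ [b] \<parallel> h" "g \<parallel> h \<Longrightarrow> g \<parallel> h @ [b]"
  by (auto simp: parallel_def dest: prefix_snocD prefix_order.trans)

lemma sorted_wrt_parallel_dup_event:
  assumes "sorted_wrt (\<parallel>) xs" "i + l \<le> length xs"
  shows "sorted_wrt (\<parallel>) (dup_event i l xs)"
proof -
  obtain P X R where xs: "xs = P @ X @ R" "length P = i" "length X = l"
    using split_list_block assms(2) by blast
  have "sorted_wrt (\<lambda>x y. x @ [b] \<parallel> y @ [b]) X" for b
    using assms(1) xs
    by (auto simp: sorted_wrt_append parallel_append elim: sorted_wrt_mono_rel[rotated])
  moreover have "x @ [False] \<parallel> y @ [True]" if "x \<in> set X" "y \<in> set X" for x y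
    using sorted_wrt_sympD[of "(\<parallel>)" X x y] that assms(1) xs
    by (cases "x = y") (auto simp: sorted_wrt_append parallel_append symp_def parallel_commute)
  ultimately show ?thesis
    using assms(1) xs
    by (auto intro: parallel_snocI
        simp: dup_event_append sorted_wrt_append sorted_wrt_map parallel_append)
qed

lemma sorted_wrt_parallel_distinct: "sorted_wrt (\<parallel>) xs \<Longrightarrow> distinct xs"
  by (induction xs) auto

lemma sorted_wrt_parallel_reachable: "dup_reachable xs \<Longrightarrow> sorted_wrt (\<parallel>) xs"
  by (induction rule: dup_reachable.induct) (auto intro: sorted_wrt_parallel_dup_event)

type_synonym event = "nat \<times> nat"

fun dup_size :: "event list \<Rightarrow> nat" where
  "dup_size [] = 0"
| "dup_size ((i, l) # es) = l + dup_size es"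

fun last_start :: "event list \<Rightarrow> nat" where
  "last_start [] = 0"
| "last_start ((i, l) # es) = i"

fun canonical :: "event list \<Rightarrow> bool" where
  "canonical [] = True"
| "canonical ((i, l) # es) \<longleftrightarrow>
     canonical es \<and> 1 \<le> l \<and> i + l \<le> Suc (dup_size es) \<and> last_start es < i + l"

fun apply_events :: "event list \<Rightarrow> bool list list" where
  "apply_events [] = [[]]"
| "apply_events ((i, l) # es) = dup_event i l (apply_events es)"

fun insert_event :: "event \<Rightarrow> event list \<Rightarrow> event list" where
  "insert_event (i, l) [] = [(i, l)]"
| "insert_event (i, l) ((j, k) # es) =
     (if j < i + l then (i, l) # (j, k) # es else (j + l, k) # insert_event (i, l) es)"

lemma length_apply_events: "canonical es \<Longrightarrow> length (apply_events es) = Suc (dup_size es)"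
  by (induction es rule: canonical.induct) (auto simp: length_dup_event)

lemma dup_size_eq_0_iff: "canonical es \<Longrightarrow> dup_size es = 0 \<longleftrightarrow> es = []"
  by (cases es rule: canonical.cases) auto

lemma dup_reachable_apply_events: "canonical es \<Longrightarrow> dup_reachable (apply_events es)"
  by (induction es rule: canonical.induct)
    (auto intro: dup_reachable.intros simp: length_apply_events)

lemma distinct_apply_events: "canonical es \<Longrightarrow> distinct (apply_events es)"
  by (simp add: dup_reachable_apply_events sorted_wrt_parallel_distinct sorted_wrt_parallel_reachable)

lemma dup_size_insert_event: "dup_size (insert_event (i, l) es) = l + dup_size es"
  by (induction es) auto

lemma apply_events_insert_event:
  "canonical es \<Longrightarrow> i + l \<le> Suc (dup_size es) \<Longrightarrow>
     apply_events (insert_event (i, l) es) = dup_event i l (apply_events es)"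
proof (induction es rule: canonical.induct)
  case (2 j k es)
  then show ?case
    by (auto simp: dup_event_commute length_apply_events)
qed simp

lemma canonical_insert_event:
  "canonical es \<Longrightarrow> 1 \<le> l \<Longrightarrow> i + l \<le> Suc (dup_size es) \<Longrightarrow> canonical (insert_event (i, l) es)"
proof (induction es rule: canonical.induct)
  case (2 j k es)
  have "last_start (insert_event (i, l) es) \<in> {i, last_start es + l}"
    by (cases es) auto
  with 2 show ?case
    by (auto simp: dup_size_insert_event)
qed simp

lemma dup_reachable_imp_canonical:
  "dup_reachable xs \<Longrightarrow> \<exists>es. canonical es \<and> apply_events es = xs"
proof (induction rule: dup_reachable.induct)
  case init
  have "canonical [] \<and> apply_events [] = [[]]" by simp
  then show ?case by blast
next
  case (step xs l i)
  then obtain es where "canonical es" "apply_events es = xs" by blast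
  with step show ?case
    by (metis canonical_insert_event apply_events_insert_event length_apply_events)
qed

definition tandem_at :: "bool list list \<Rightarrow> nat \<Rightarrow> nat \<Rightarrow> bool" where
  "tandem_at ys s l \<longleftrightarrow> 1 \<le> l \<and> s + 2 * l \<le> length ys \<and>
     (\<forall>j<l. \<exists>g. ys ! (s + j) = g @ [False] \<and> ys ! (s + l + j) = g @ [True])"

lemma tandem_at_dup_event: "i + l \<le> length xs \<Longrightarrow> 1 \<le> l \<Longrightarrow> tandem_at (dup_event i l xs) i l"
  by (auto simp: tandem_at_def nth_dup_event length_dup_event)

lemma tandem_at_length_unique:
  assumes "distinct ys" "tandem_at ys s l" "tandem_at ys s l'"
  shows "l = l'"
proof -
  obtain g where "ys ! s = g @ [False]" "ys ! (s + l) = g @ [True]"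
    using assms(2) unfolding tandem_at_def by fastforce
  moreover obtain g' where "ys ! s = g' @ [False]" "ys ! (s + l') = g' @ [True]"
    using assms(3) unfolding tandem_at_def by fastforce
  ultimately have "ys ! (s + l) = ys ! (s + l')" by simp
  with assms show ?thesis
    unfolding tandem_at_def by (simp add: nth_eq_iff_index_eq)
qed

lemma tandem_at_dup_event_right:
  assumes "i + l \<le> length xs" "i + 2 * l \<le> s" "tandem_at (dup_event i l xs) s l'"
  shows "tandem_at xs (s - l) l'"
  using assms by (auto simp: tandem_at_def nth_dup_event length_dup_event algebra_simps)

lemma tandem_at_le_last_start:
  "canonical es \<Longrightarrow> tandem_at (apply_events es) s l' \<Longrightarrow> s \<le> last_start es"
proof (induction es arbitrary: s rule: canonical.induct)
  case 1
  then show ?case by (simp add: tandem_at_def)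
next
  case (2 i l es)
  let ?xs = "apply_events es" and ?ys = "apply_events ((i, l) # es)"
  have es: "canonical es" "1 \<le> l" "i + l \<le> length ?xs" "last_start es < i + l"
    using "2.prems"(1) by (auto simp: length_apply_events)
  have tandem: "1 \<le> l'" "s + 2 * l' \<le> length ?ys"
    "\<And>j. j < l' \<Longrightarrow> \<exists>g. ?ys ! (s + j) = g @ [False] \<and> ?ys ! (s + l' + j) = g @ [True]"
    using "2.prems"(2) unfolding tandem_at_def by auto
  have len: "length ?ys = length ?xs + l"
    using es(3) by (simp add: length_dup_event)
  show ?case
  proof (rule ccontr)
    assume "\<not> s \<le> last_start ((i, l) # es)"
    then have "i < s" by simp
    consider "s < i + l" | "i + l \<le> s" "s < i + 2 * l" | "i + 2 * l \<le> s" by linarith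
    then show False
    proof cases
      case 1
      \<comment> \<open>The right sibling of the gene at s sits both at s + l and at s + l', so l' = l;
        but then the tandem block at s would contain the right child at i + l.\<close>
      obtain g where g: "?ys ! s = g @ [False]" "?ys ! (s + l') = g @ [True]"
        using tandem(1) tandem(3)[of 0] by auto
      with 1 \<open>i < s\<close> es(3) tandem(2) len have "?ys ! (s + l') = ?ys ! (s + l)"
        by (simp add: nth_dup_event)
      with 1 es(3) tandem(2) len distinct_apply_events[OF "2.prems"(1)] have "l' = l"
        by (simp add: nth_eq_iff_index_eq)
      with 1 \<open>i < s\<close> have "i + l - s < l'" by simp
      then obtain h where "?ys ! (s + (i + l - s)) = h @ [False]"
        using tandem(3) by blast
      with 1 es(2,3) show False
        by (simp add: nth_dup_event)
    next
      case 2
      with tandem(1) tandem(3)[of 0] len es(3) show False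
        by (auto simp: nth_dup_event)
    next
      case 3
      then have "tandem_at ?xs (s - l) l'"
        using tandem_at_dup_event_right es(3) "2.prems"(2) by simp
      with "2.IH" es(1) 3 es(4) show False by fastforce
    qed
  qed
qed

lemma apply_events_inj:
  "canonical es \<Longrightarrow> canonical es' \<Longrightarrow> apply_events es = apply_events es' \<Longrightarrow> es = es'"
proof (induction es arbitrary: es' rule: canonical.induct)
  case 1
  then have "dup_size es' = 0"
    using length_apply_events[OF "1.prems"(2)] "1.prems"(3)[symmetric] by simp
  with "1.prems"(2) show ?case
    by (simp add: dup_size_eq_0_iff)
next
  case (2 i l es)
  let ?ys = "apply_events ((i, l) # es)"
  have "dup_size es' \<noteq> 0"
    using "2.prems" length_apply_events[of es'] length_apply_events[of "(i, l) # es"] by auto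
  then obtain i' l' es'' where es': "es' = (i', l') # es''"
    by (metis dup_size.elims)
  have len: "i + l \<le> length (apply_events es)" "i' + l' \<le> length (apply_events es'')"
    using "2.prems"(1,2) es' by (auto simp: length_apply_events)
  have tandem: "tandem_at ?ys i l" "tandem_at ?ys i' l'"
  proof -
    show "tandem_at ?ys i l"
      using "2.prems"(1) len(1) by (simp add: tandem_at_dup_event)
    show "tandem_at ?ys i' l'"
      using "2.prems"(2,3) es' len(2) by (simp add: tandem_at_dup_event)
  qed
  then have "i = i'"
    using tandem_at_le_last_start[OF "2.prems"(1), of i' l']
      tandem_at_le_last_start[OF "2.prems"(2), of i l] "2.prems"(3) es' by simp
  with tandem have "l = l'"
    using tandem_at_length_unique[OF distinct_apply_events[OF "2.prems"(1)]] by blast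
  moreover have "length (apply_events es'') = length (apply_events es)"
    using arg_cong[OF "2.prems"(3), of length] es' len \<open>i = i'\<close> \<open>l = l'\<close>
    by (simp add: length_dup_event)
  ultimately have "apply_events es = apply_events es''"
    using dup_event_inj[OF len(1)] "2.prems"(3) es' \<open>i = i'\<close> by simp
  with "2.IH" "2.prems"(1,2) es' \<open>i = i'\<close> \<open>l = l'\<close> show ?case
    by simp
qed

lemma counter_array_snoc:
  "counter_array (Suc n) (a @ [v]) \<longleftrightarrow>
     counter_array n a \<and> 1 \<le> v \<and> v \<le> Suc n \<and> (0 < n \<longrightarrow> last a \<le> Suc v)"
proof (cases n)
  case 0
  then show ?thesis by (auto simp: counter_array_def)
next
  case (Suc m)
  have bounds: "(\<forall>i<Suc n. P i) \<longleftrightarrow> (\<forall>i<n. P i) \<and> P n" for P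
    using less_Suc_eq by auto
  have steps: "(\<forall>i. i + 1 < Suc n \<longrightarrow> P i) \<longleftrightarrow> (\<forall>i. i + 1 < n \<longrightarrow> P i) \<and> P m" for P
    using Suc less_Suc_eq by auto
  have "length a = n \<Longrightarrow> last a = a ! m"
    using Suc by (metis diff_Suc_1 last_conv_nth list.size(3) nat.distinct(1))
  then show ?thesis
    unfolding counter_array_def bounds steps
    using Suc by (auto simp: nth_append)
qed

fun desc_run :: "nat \<Rightarrow> nat \<Rightarrow> nat list" where
  "desc_run i 0 = []"
| "desc_run i (Suc l) = desc_run (Suc i) l @ [Suc i]"

fun counter_code :: "event list \<Rightarrow> nat list" where
  "counter_code [] = []"
| "counter_code ((i, l) # es) = counter_code es @ desc_run i l"

fun push_value :: "nat \<Rightarrow> event list \<Rightarrow> event list" where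
  "push_value v [] = [(v - 1, 1)]"
| "push_value v ((i, l) # es) =
     (if v = i then (i - 1, Suc l) # es else (v - 1, 1) # (i, l) # es)"

definition decode :: "nat list \<Rightarrow> event list" where
  "decode a = fold push_value a []"

lemma length_desc_run [simp]: "length (desc_run i l) = l"
  by (induction l arbitrary: i) auto

lemma desc_run_eq_Nil_iff [simp]: "desc_run i l = [] \<longleftrightarrow> l = 0"
  by (cases l) auto

lemma last_desc_run: "1 \<le> l \<Longrightarrow> last (desc_run i l) = Suc i"
  by (cases l) auto

lemma length_counter_code: "length (counter_code es) = dup_size es"
  by (induction es rule: counter_code.induct) auto

lemma last_counter_code:
  "canonical es \<Longrightarrow> es \<noteq> [] \<Longrightarrow> last (counter_code es) = Suc (last_start es)"
  by (cases es rule: canonical.cases) (auto simp: last_desc_run)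

lemma counter_array_append_desc_run:
  "counter_array n a \<Longrightarrow> 1 \<le> l \<Longrightarrow> i + l \<le> Suc n \<Longrightarrow> (0 < n \<longrightarrow> last a \<le> Suc (i + l)) \<Longrightarrow>
     counter_array (n + l) (a @ desc_run i l)"
proof (induction l arbitrary: i)
  case (Suc l)
  show ?case
  proof (cases "l = 0")
    case True
    with Suc.prems show ?thesis
      by (simp add: counter_array_snoc)
  next
    case False
    with Suc have "counter_array (n + l) (a @ desc_run (Suc i) l)"
      by simp
    moreover have "last (a @ desc_run (Suc i) l) = Suc (Suc i)"
      using False by (simp add: last_desc_run)
    ultimately show ?thesis
      using Suc.prems by (simp add: counter_array_snoc flip: append_assoc)
  qed
qed simp

lemma counter_array_counter_code: "canonical es \<Longrightarrow> counter_array (dup_size es) (counter_code es)"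
proof (induction es rule: canonical.induct)
  case 1
  then show ?case by (simp add: counter_array_def)
next
  case (2 i l es)
  then have "0 < dup_size es \<longrightarrow> last (counter_code es) \<le> Suc (i + l)"
    by (cases "es = []") (auto simp: last_counter_code)
  with 2 show ?case
    using counter_array_append_desc_run[of "dup_size es" "counter_code es" l i]
    by (simp add: add.commute)
qed

lemma fold_push_value_desc_run:
  "canonical ((i, l) # es) \<Longrightarrow> fold push_value (desc_run i l) es = (i, l) # es"
proof (induction l arbitrary: i)
  case (Suc l)
  show ?case
  proof (cases "l = 0")
    case True
    with Suc.prems show ?thesis
      by (cases es rule: last_start.cases) auto
  next
    case False
    with Suc show ?thesis
      by simp
  qed
qed simp

lemma decode_counter_code: "canonical es \<Longrightarrow> decode (counter_code es) = es"
  by (induction es rule: canonical.induct) (simp_all add: decode_def fold_push_value_desc_run)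

lemma counter_code_push_value:
  "1 \<le> v \<Longrightarrow> counter_code (push_value v es) = counter_code es @ [v]"
  by (induction es rule: push_value.induct) auto

lemma canonical_push_value:
  assumes "canonical es" "counter_array (Suc (dup_size es)) (counter_code es @ [v])"
  shows "canonical (push_value v es)"
proof -
  have v: "1 \<le> v" "v \<le> Suc (dup_size es)" "0 < dup_size es \<longrightarrow> last (counter_code es) \<le> Suc v"
    using assms(2) counter_array_snoc by blast+
  show ?thesis
  proof (cases es rule: last_start.cases)
    case 1
    with v show ?thesis by simp
  next
    case (2 i l es')
    with assms(1) have "last (counter_code es) = Suc i"
      using last_counter_code by fastforce
    with assms(1) v 2 show ?thesis
      by auto
  qed
qed

lemma counter_array_decode:
  "counter_array n a \<Longrightarrow> canonical (decode a) \<and> counter_code (decode a) = a"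
proof (induction a arbitrary: n rule: rev_induct)
  case Nil
  then show ?case by (simp add: decode_def)
next
  case (snoc v a)
  then obtain m where n: "n = Suc m" and "counter_array m a" "1 \<le> v"
    by (metis counter_array_def counter_array_snoc length_append_singleton)
  with snoc.IH have "canonical (decode a)" "counter_code (decode a) = a"
    by blast+
  moreover from this have "dup_size (decode a) = m"
    using \<open>counter_array m a\<close> by (metis counter_array_def length_counter_code)
  ultimately show ?case
    using snoc.prems n \<open>1 \<le> v\<close> canonical_push_value counter_code_push_value
    by (simp add: decode_def)
qed

lemma bij_betw_apply_events:
  "bij_betw apply_events {es. canonical es \<and> dup_size es = n} {xs. dup_reachable xs \<and> length xs = Suc n}"
proof (rule bij_betw_imageI)
  show "inj_on apply_events {es. canonical es \<and> dup_size es = n}"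
    using apply_events_inj by (auto intro: inj_onI)
  show "apply_events ` {es. canonical es \<and> dup_size es = n} = {xs. dup_reachable xs \<and> length xs = Suc n}"
    using dup_reachable_apply_events dup_reachable_imp_canonical length_apply_events by fastforce
qed

lemma bij_betw_counter_code:
  "bij_betw counter_code {es. canonical es \<and> dup_size es = n} {a. counter_array n a}"
proof (rule bij_betw_byWitness[where f' = decode])
  show "\<forall>es\<in>{es. canonical es \<and> dup_size es = n}. decode (counter_code es) = es"
    by (simp add: decode_counter_code)
  show "\<forall>a\<in>{a. counter_array n a}. counter_code (decode a) = a"
    using counter_array_decode by blast
  show "counter_code ` {es. canonical es \<and> dup_size es = n} \<subseteq> {a. counter_array n a}"
    using counter_array_counter_code by blast
  show "decode ` {a. counter_array n a} \<subseteq> {es. canonical es \<and> dup_size es = n}"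
  proof clarify
    fix a assume "counter_array n a"
    then have "canonical (decode a)" "counter_code (decode a) = a" "length a = n"
      using counter_array_decode by (auto simp: counter_array_def)
    then show "canonical (decode a) \<and> dup_size (decode a) = n"
      by (metis length_counter_code)
  qed
qed

theorem lemma3p2:
  fixes n :: nat
  assumes "n \<ge> 1"
  shows "r_dup (n + 1) = sigma n"
proof -
  have "r_dup (n + 1) = card {es. canonical es \<and> dup_size es = n}"
    unfolding r_dup_def Suc_eq_plus1[symmetric]
    by (rule bij_betw_same_card[OF bij_betw_apply_events, symmetric])
  also have "\<dots> = sigma n"
    unfolding sigma_def using bij_betw_same_card[OF bij_betw_counter_code] .
  finally show ?thesis .
qed

end
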